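(* Let $d\ge 1$ and $n\ge 1$ be integers, and let $W_d(x)=\pi^{-d}\prod_{i=1}^d (1-x_i^2)^{-1/2}$ on $[-1,1]^d$. Let $I^E_n, I^O_n$ be the one-dimensional functionals defined as follows: if $n=2m$, $$I^E_n f := \frac{1}{n}\Big(\tfrac12 f(-1)+\sum_{j=1}^{m-1} f\big(\cos\tfrac{2j\pi}{n}\big)+\tfrac12 f(1)\Big),\qquad I^O_n f := \frac{1}{n}\sum_{j=1}^{m} f\big(\cos\tfrac{(2j-1)\pi}{n}\big);$$ if $n=2m-1$, $$I^E_n f := \frac{1}{n}\Big(\sum_{j=1}^{m-1} f\big(\cos\tfrac{2j\pi}{n}\big)+\tfrac12 f(1)\Big),\qquad I^O_n f := \frac{1}{n}\Big(\tfrac12 f(-1)+\sum_{j=1}^{m-1} f\big(\cos\tfrac{(2j-1)\pi}{n}\big)\Big).$$ For $\sigma=(\sigma_1,\ldots,\sigma_d)\in\{E,O\}^d$, let $\tilde\sigma$ be obtained by swapping $E\leftrightarrow O$ in each coordinate, and for $f:[-1,1]^d\to\mathbb{R}$ define $$I^{\sigma}_{n,d} f := I^{\sigma_1}_n\cdots I^{\sigma_d}_n f + I^{\tilde\sigma_1}_n\cdots I^{\tilde\sigma_d}_n f,$$ where $I^{\sigma_1}_n\cdots I^{\sigma_d}_n f$ denotes the $d$-fold sum in which $I^{\sigma_k}_n$ is applied to the $k$-th variable of $f$. Then for each $\sigma\in\{E,O\}^d$ the cubature formula $$\int_{[-1,1]^d} f(x)\,W_d(x)\,dx = 2^{d-1}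 I^{\sigma}_{n,d} f$$ holds for every polynomial $f$ in $d$ variables of total degree at most $2n-1$, and its number of nodes $N$ satisfies $N = 2\left(\lfloor n/2\rfloor\right)^d\,(1+O(n^{-1}))$ as $n\to\infty$.
   Context: The weight $W_d$ is the product Chebyshev weight, normalized so that $\int_{[-1,1]^d}W_d(x)\,dx=1$. The nodes of the formula are the points of the two product grids $G_{\sigma_1}\times\cdots\times G_{\sigma_d}$ and $G_{\tilde\sigma_1}\times\cdots\times G_{\tilde\sigma_d}$, where $G_E$ (resp. $G_O$) is the set of points $\cos\frac{j\pi}{n}$, $0\le j\le n$, at which $I^E_n$ (resp. $I^O_n$) evaluates $f$ (even $j$, resp. odd $j$); $N$ is the total number of these nodes. *)

theory Defs
  imports "HOL-Analysis.Analysis" "HOL-Probability.Probability" "HOL-Library.Landau_Symbols"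
begin

text \<open>Points of R^d are functions nat => real; only coordinates i < d are relevant.\<close>

datatype EO = Ev | Od

fun swapEO :: "EO \<Rightarrow> EO" where
  "swapEO Ev = Od" | "swapEO Od = Ev"

definition chebW :: "nat \<Rightarrow> (nat \<Rightarrow> real) \<Rightarrow> real" where
  "chebW d x = (\<Prod>i<d. 1 / sqrt (1 - (x i)^2)) / pi ^ d"

definition IE :: "nat \<Rightarrow> (real \<Rightarrow> real) \<Rightarrow> real" where
  "IE n g = (if even n then
      (let m = n div 2 in (1 / real n) * (1/2 * g (-1) + (\<Sum>j=1..m-1. g (cos (2 * real j * pi / real n))) + 1/2 * g 1))
    else
      (let m = (n + 1) div 2 in (1 / real n) * ((\<Sum>j=1..m-1. g (cos (2 * real j * pi / real n))) + 1/2 * g 1)))"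

definition IO :: "nat \<Rightarrow> (real \<Rightarrow> real) \<Rightarrow> real" where
  "IO n g = (if even n then
      (let m = n div 2 in (1 / real n) * (\<Sum>j=1..m. g (cos ((2 * real j - 1) * pi / real n))))
    else
      (let m = (n + 1) div 2 in (1 / real n) * (1/2 * g (-1) + (\<Sum>j=1..m-1. g (cos ((2 * real j - 1) * pi / real n))))))"

definition I1 :: "EO \<Rightarrow> nat \<Rightarrow> (real \<Rightarrow> real) \<Rightarrow> real" where
  "I1 s n g = (case s of Ev \<Rightarrow> IE n g | Od \<Rightarrow> IO n g)"

fun iterI :: "(nat \<Rightarrow> EO) \<Rightarrow> nat \<Rightarrow> nat \<Rightarrow> ((nat \<Rightarrow> real) \<Rightarrow> real) \<Rightarrow> (nat \<Rightarrow> real) \<Rightarrow> real" where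
  "iterI \<sigma> n 0 f x = f x"
| "iterI \<sigma> n (Suc k) f x = I1 (\<sigma> k) n (\<lambda>t. iterI \<sigma> n k f (x(k := t)))"

definition Ind :: "(nat \<Rightarrow> EO) \<Rightarrow> nat \<Rightarrow> nat \<Rightarrow> ((nat \<Rightarrow> real) \<Rightarrow> real) \<Rightarrow> real" where
  "Ind \<sigma> n d f = iterI \<sigma> n d f (\<lambda>_. 0) + iterI (swapEO \<circ> \<sigma>) n d f (\<lambda>_. 0)"

definition poly_deg_le :: "nat \<Rightarrow> nat \<Rightarrow> ((nat \<Rightarrow> real) \<Rightarrow> real) \<Rightarrow> bool" where
  "poly_deg_le d k f \<longleftrightarrow> (\<exists>c :: (nat \<Rightarrow> nat) \<Rightarrow> real. \<forall>x.
     f x = (\<Sum>\<alpha> \<in> {\<alpha>. (\<forall>i\<ge>d. \<alpha> i = 0) \<and> (\<Sum>i<d. \<alpha> i) \<le> k}. c \<alpha> * (\<Prod>i<d. x i ^ \<alpha> i)))"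

definition G :: "EO \<Rightarrow> nat \<Rightarrow> real set" where
  "G s n = {cos (real j * pi / real n) | j. j \<le> n \<and> (case s of Ev \<Rightarrow> even j | Od \<Rightarrow> odd j)}"

definition grid :: "(nat \<Rightarrow> EO) \<Rightarrow> nat \<Rightarrow> nat \<Rightarrow> (nat \<Rightarrow> real) set" where
  "grid \<sigma> n d = PiE {..<d} (\<lambda>i. G (\<sigma> i) n)"

definition num_nodes :: "(nat \<Rightarrow> EO) \<Rightarrow> nat \<Rightarrow> nat \<Rightarrow> nat" where
  "num_nodes \<sigma> n d = card (grid \<sigma> n d \<union> grid (swapEO \<circ> \<sigma>) n d)"

end

theory Submission
  imports Defs
begin

text \<open>The functionals \<open>I\<^sup>E\<^sub>n\<close>, \<open>I\<^sup>O\<^sub>n\<close> are the even and odd halves of the sum of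
  \<open>f (cos (j\<pi>/n))\<close> over a full period \<open>j < 2n\<close>. Expanding \<open>cos\<^sup>a \<theta>\<close> into the
  frequencies \<open>(2i - a)\<theta>\<close>, the full sum annihilates every frequency that is not a multiple of
  \<open>2n\<close>: hence \<open>I\<^sup>E\<^sub>n + I\<^sup>O\<^sub>n\<close> reproduces the Chebyshev moment of \<open>t\<^sup>a\<close> for
  \<open>a < 2n\<close>, while the alternating sum \<open>I\<^sup>E\<^sub>n - I\<^sup>O\<^sub>n\<close> vanishes for \<open>a < n\<close>, so each
  half alone gives half the moment. A monomial of total degree \<open>< 2n\<close> has at most one exponent
  \<open>\<ge> n\<close>, and on it the sum of the two complementary tensor products is exact. The moments
  themselves come from an antiderivative of \<open>cos\<^sup>a \<theta>\<close> under \<open>t = cos \<theta>\<close>.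
  For the node count, the two grids are disjoint and every one-dimensional factor has
  \<open>\<lfloor>n/2\<rfloor>\<close> or \<open>\<lfloor>n/2\<rfloor> + 1\<close> points.\<close>

lemma cos_power_eq_sum:
  "cos x ^ a = (\<Sum>i\<le>a. real (a choose i) * cos (real_of_int (2 * int i - int a) * x)) / 2 ^ a"
proof -
  have cis: "complex_of_real (2 * cos x) = cis x + cis (-x)"
    by (simp add: complex_eq_iff)
  have "complex_of_real ((2 * cos x) ^ a) = (cis x + cis (-x)) ^ a"
    by (simp only: of_real_power cis)
  also have "\<dots> = (\<Sum>i\<le>a. of_nat (a choose i) * cis x ^ i * cis (-x) ^ (a - i))"
    by (rule binomial_ring)
  also have "\<dots> = (\<Sum>i\<le>a. of_nat (a choose i) * cis (real_of_int (2 * int i - int a) * x))"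
  proof (rule sum.cong[OF refl])
    fix i assume "i \<in> {..a}"
    then have "cis x ^ i * cis (-x) ^ (a - i) = cis (real_of_int (2 * int i - int a) * x)"
      by (simp only: Complex.DeMoivre cis_mult) (simp add: algebra_simps)
    then show "of_nat (a choose i) * cis x ^ i * cis (-x) ^ (a - i)
        = of_nat (a choose i) * cis (real_of_int (2 * int i - int a) * x)"
      by (simp add: mult.assoc)
  qed
  finally have "Re (complex_of_real ((2 * cos x) ^ a))
      = Re (\<Sum>i\<le>a. of_nat (a choose i) * cis (real_of_int (2 * int i - int a) * x))"
    by simp
  then show ?thesis
    by (simp add: field_simps)
qed

lemma sum_cos_int_multiple:
  assumes "n > 0"
  shows "(\<Sum>j<2*n. cos (real_of_int m * (real j * pi / real n)))
       = (if (2 * int n) dvd m then 2 * real n else 0)"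
proof (cases "(2 * int n) dvd m")
  case True
  then obtain k where k: "m = 2 * int n * k" by blast
  have "cos (real_of_int m * (real j * pi / real n)) = 1" for j
  proof -
    have "real_of_int m * (real j * pi / real n) = real_of_int (k * int j) * 2 * pi"
      using assms by (simp add: k field_simps)
    then show ?thesis by (simp only: cos_one_2pi_int) blast
  qed
  then show ?thesis using True by simp
next
  case False
  define z where "z = cis (real_of_int m * pi / real n)"
  have "z \<noteq> 1"
  proof
    assume "z = 1"
    then have "cos (real_of_int m * pi / real n) = 1"
      unfolding z_def by (metis cis.simps(1) one_complex.simps(1))
    then obtain t :: int where "real_of_int m * pi / real n = t * 2 * pi"
      by (auto simp: cos_one_2pi_int)
    then have "real_of_int m = real_of_int (2 * int n * t)"
      using assms by (simp add: field_simps)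
    then have "m = 2 * int n * t"
      by (simp only: of_int_eq_iff)
    then show False using False by simp
  qed
  moreover have "z ^ (2*n) = 1"
  proof -
    have "z ^ (2*n) = cis (2 * pi * real_of_int m)"
      unfolding z_def Complex.DeMoivre using assms by (simp add: field_simps)
    then show ?thesis by simp
  qed
  ultimately have "Re (\<Sum>j<2*n. z ^ j) = 0"
    using geometric_sum[of z "2*n"] by simp
  moreover have "Re (z ^ j) = cos (real_of_int m * (real j * pi / real n))" for j
    unfolding z_def Complex.DeMoivre by (simp add: field_simps)
  ultimately show ?thesis using False by simp
qed

abbreviation cheb_node :: "nat \<Rightarrow> nat \<Rightarrow> real" where
  "cheb_node n j \<equiv> cos (real j * pi / real n)"

definition EO_parity :: "EO \<Rightarrow> nat \<Rightarrow> bool" where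
  "EO_parity s j = (case s of Ev \<Rightarrow> even j | Od \<Rightarrow> odd j)"

lemma EO_parity_swapEO [simp]: "EO_parity (swapEO s) j \<longleftrightarrow> \<not> EO_parity s j"
  by (cases s) (simp_all add: EO_parity_def)

definition parity_rule :: "EO \<Rightarrow> nat \<Rightarrow> (real \<Rightarrow> real) \<Rightarrow> real" where
  "parity_rule s n g =
     (\<Sum>j<2*n. if EO_parity s j then g (cheb_node n j) else 0) / (2 * real n)"

lemma sum_lessThan_double_symmetric:
  fixes h :: "nat \<Rightarrow> 'a::comm_semiring_1"
  assumes "n > 0" and "\<And>j. j \<in> {1..<n} \<Longrightarrow> h (2*n - j) = h j"
  shows "(\<Sum>j<2*n. h j) = h 0 + h n + 2 * (\<Sum>j\<in>{1..<n}. h j)"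
proof -
  have "(\<Sum>j<2*n. h j) = (\<Sum>j\<in>{0..<n}. h j) + (\<Sum>j\<in>{n..<2*n}. h j)"
    by (simp add: atLeast0LessThan[symmetric] sum.atLeastLessThan_concat)
  also have "(\<Sum>j\<in>{0..<n}. h j) = h 0 + (\<Sum>j\<in>{1..<n}. h j)"
    using assms(1) by (simp add: sum.atLeast_Suc_lessThan)
  also have "(\<Sum>j\<in>{n..<2*n}. h j) = h n + (\<Sum>j\<in>{Suc n..<2*n}. h (2*n - (2*n - j)))"
    using assms(1) by (simp add: sum.atLeast_Suc_lessThan)
  also have "(\<Sum>j\<in>{Suc n..<2*n}. h (2*n - (2*n - j))) = (\<Sum>j\<in>{1..<n}. h (2*n - j))"
    by (rule sum.reindex_bij_witness[of _ "\<lambda>j. 2*n - j" "\<lambda>j. 2*n - j"]) auto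
  also have "\<dots> = (\<Sum>j\<in>{1..<n}. h j)"
    using assms(2) by simp
  finally show ?thesis
    by (simp add: mult_2 add_ac)
qed

lemma sum_even_atLeastLessThan:
  fixes \<phi> :: "nat \<Rightarrow> 'a::comm_monoid_add"
  shows "(\<Sum>j\<in>{1..<n}. if even j then \<phi> j else 0) = (\<Sum>i=1..(n-1) div 2. \<phi> (2*i))"
proof -
  have "(\<Sum>j\<in>{1..<n}. if even j then \<phi> j else 0) = sum \<phi> {j\<in>{1..<n}. even j}"
    by (rule sum.inter_filter[symmetric]) simp
  also have "{j\<in>{1..<n}. even j} = (\<lambda>i. 2*i) ` {1..(n-1) div 2}"
    by (auto elim!: evenE)
  finally show ?thesis
    by (simp add: sum.reindex inj_on_def)
qed

lemma sum_odd_atLeastLessThan: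
  fixes \<phi> :: "nat \<Rightarrow> 'a::comm_monoid_add"
  shows "(\<Sum>j\<in>{1..<n}. if odd j then \<phi> j else 0) = (\<Sum>i=1..n div 2. \<phi> (2*i - 1))"
proof -
  have "{j\<in>{1..<n}. odd j} = (\<lambda>i. 2*i - 1) ` {1..n div 2}"
  proof (intro set_eqI iffI)
    fix j assume "j \<in> {j\<in>{1..<n}. odd j}"
    then obtain i where "j = 2*i + 1" "j < n" by (auto elim: oddE)
    then show "j \<in> (\<lambda>i. 2*i - 1) ` {1..n div 2}" by (intro image_eqI[of _ _ "i+1"]) auto
  qed auto
  moreover have "inj_on (\<lambda>i. 2*i - 1) {1..n div 2}"
    by (auto simp: inj_on_def)
  moreover have "(\<Sum>j\<in>{1..<n}. if odd j then \<phi> j else 0) = sum \<phi> {j\<in>{1..<n}. odd j}"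
    by (rule sum.inter_filter[symmetric]) simp
  ultimately show ?thesis
    by (simp add: sum.reindex)
qed

text \<open>Over the full period \<open>j < 2n\<close> every interior node \<open>cos (j\<pi>/n)\<close>, \<open>0 < j < n\<close>,
  occurs twice and the endpoints \<open>\<plusminus>1\<close> once; this produces the weights \<open>1/2\<close> at \<open>\<plusminus>1\<close>.\<close>
lemma parity_rule_eq:
  assumes "n > 0"
  shows "parity_rule s n g = 1 / real n * ((if EO_parity s n then g (-1) else 0) / 2
      + (\<Sum>j\<in>{1..<n}. if EO_parity s j then g (cheb_node n j) else 0)
      + (if EO_parity s 0 then g 1 else 0) / 2)"
proof -
  let ?\<phi> = "\<lambda>j. g (cheb_node n j)"
  let ?P = "EO_parity s"
  have "(\<Sum>j<2*n. if ?P j then ?\<phi> j else 0) = (if ?P 0 then ?\<phi> 0 else 0) + (if ?P n then ?\<phi> n else 0)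
      + 2 * (\<Sum>j\<in>{1..<n}. if ?P j then ?\<phi> j else 0)"
  proof (rule sum_lessThan_double_symmetric[OF assms])
    fix j assume j: "j \<in> {1..<n}"
    then have "?P (2*n - j) = ?P j"
      by (cases s) (auto simp: EO_parity_def)
    moreover have "real (2*n - j) * pi / real n = 2 * pi - real j * pi / real n"
      using assms j by (simp add: field_simps)
    ultimately show "(if ?P (2*n - j) then ?\<phi> (2*n - j) else 0) = (if ?P j then ?\<phi> j else 0)"
      by simp
  qed
  moreover have "(a + b + 2 * c) / (2 * x) = 1 / x * (b / 2 + c + a / 2)" for a b c x :: real
    by (simp add: field_simps)
  ultimately show ?thesis
    using assms by (simp add: parity_rule_def)
qed

lemma I1_eq_parity_rule:
  assumes "n > 0"
  shows "I1 s n g = parity_rule s n g"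
proof -
  let ?\<phi> = "\<lambda>j. g (cheb_node n j)"
  let ?P = "EO_parity s"
  note rule = parity_rule_eq[OF assms, of s g]
  show ?thesis
  proof (cases s)
    case Ev
    have sum: "(\<Sum>j\<in>{1..<n}. if ?P j then ?\<phi> j else 0)
        = (\<Sum>i=1..(n-1) div 2. g (cos (2 * real i * pi / real n)))"
      unfolding Ev EO_parity_def EO.case sum_even_atLeastLessThan by simp
    show ?thesis
    proof (cases "even n")
      case True
      then have "(n-1) div 2 = n div 2 - 1"
        by (auto elim!: evenE)
      with True sum rule show ?thesis
        by (simp add: I1_def Ev IE_def EO_parity_def)
    next
      case False
      then have "(n-1) div 2 = (n+1) div 2 - 1"
        by (auto elim!: oddE)
      with False sum rule show ?thesis
        by (simp add: I1_def Ev IE_def EO_parity_def)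
    qed
  next
    case Od
    have sum: "(\<Sum>j\<in>{1..<n}. if ?P j then ?\<phi> j else 0)
        = (\<Sum>i=1..n div 2. g (cos ((2 * real i - 1) * pi / real n)))"
      unfolding Od EO_parity_def EO.case sum_odd_atLeastLessThan
      by (rule sum.cong) auto
    show ?thesis
    proof (cases "even n")
      case True
      with sum rule show ?thesis
        by (simp add: I1_def Od IO_def EO_parity_def)
    next
      case False
      then have "(n+1) div 2 - 1 = n div 2"
        by (auto elim!: oddE)
      with False sum rule show ?thesis
        by (simp add: I1_def Od IO_def EO_parity_def)
    qed
  qed
qed

definition cheb_moment :: "nat \<Rightarrow> real" where
  "cheb_moment a = (if even a then real (a choose (a div 2)) / 2 ^ a else 0)"

lemma cheb_moment_eq_sum:
  "cheb_moment a = (\<Sum>i\<le>a. if 2 * i = a then real (a choose i) else 0) / 2 ^ a"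
proof (cases "even a")
  case True
  then have "(2 * i = a) = (i = a div 2)" for i by auto
  with True show ?thesis by (simp add: cheb_moment_def)
next
  case False
  then have "2 * i \<noteq> a" for i by auto
  with False show ?thesis by (simp add: cheb_moment_def)
qed

lemma parity_rule_add_swap:
  "parity_rule s n g + parity_rule (swapEO s) n g = (\<Sum>j<2*n. g (cheb_node n j)) / (2 * real n)"
proof -
  have "(if EO_parity s j then x else 0) + (if \<not> EO_parity s j then x else 0) = x" for j and x :: real
    by simp
  then show ?thesis
    unfolding parity_rule_def by (simp add: add_divide_distrib[symmetric] sum.distrib[symmetric])
qed

lemma parity_rule_diff:
  "parity_rule Ev n g - parity_rule Od n g = (\<Sum>j<2*n. (-1) ^ j * g (cheb_node n j)) / (2 * real n)"
proof -
  have "(if even j then x else 0) - (if odd j then x else 0) = (-1) ^ j * x" for j :: nat and x :: real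
    by simp
  then show ?thesis
    unfolding parity_rule_def EO_parity_def
    by (simp add: diff_divide_distrib[symmetric] sum_subtractf[symmetric])
qed

lemma sum_cheb_node_power:
  assumes "n > 0" and "a < 2*n"
  shows "(\<Sum>j<2*n. cheb_node n j ^ a) = 2 * real n * cheb_moment a"
proof -
  have dvd_iff: "(2 * int n) dvd (2 * int i - int a) \<longleftrightarrow> 2 * i = a" if "i \<le> a" for i
  proof
    assume dvd: "(2 * int n) dvd (2 * int i - int a)"
    show "2 * i = a"
    proof (rule ccontr)
      assume "2 * i \<noteq> a"
      then have "2 * int i - int a \<noteq> 0"
        by simp
      then have "\<bar>2 * int n\<bar> \<le> \<bar>2 * int i - int a\<bar>"
        using dvd by (rule dvd_imp_le_int)
      moreover have "\<bar>2 * int i - int a\<bar> < 2 * int n"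
        using that assms by auto
      ultimately show False by simp
    qed
  qed auto
  have "(\<Sum>j<2*n. cheb_node n j ^ a)
      = (\<Sum>i\<le>a. real (a choose i)
           * (\<Sum>j<2*n. cos (real_of_int (2 * int i - int a) * (real j * pi / real n)))) / 2 ^ a"
    by (simp only: cos_power_eq_sum sum_divide_distrib[symmetric] sum_distrib_left sum.swap[of _ "{..<2*n}"])
  also have "\<dots> = (\<Sum>i\<le>a. 2 * real n * (if 2 * i = a then real (a choose i) else 0)) / 2 ^ a"
    by (intro arg_cong[where f = "\<lambda>x. x / 2 ^ a"] sum.cong refl)
       (simp only: sum_cos_int_multiple[OF assms(1)] dvd_iff atMost_iff, simp)
  finally show ?thesis
    by (simp only: cheb_moment_eq_sum sum_distrib_left times_divide_eq_right)
qed

lemma sum_alternating_cheb_node_power: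
  assumes "n > 0" and "a < n"
  shows "(\<Sum>j<2*n. (-1) ^ j * cheb_node n j ^ a) = 0"
proof -
  have shift: "(-1) ^ j * cos (real_of_int m * (real j * pi / real n))
      = cos (real_of_int (m + int n) * (real j * pi / real n))" for j m
  proof -
    have "real_of_int (m + int n) * (real j * pi / real n) = real_of_int m * (real j * pi / real n) + real j * pi"
      using assms by (simp add: field_simps)
    then show ?thesis by (simp add: cos_add)
  qed
  have not_dvd: "\<not> (2 * int n) dvd (2 * int i - int a + int n)" if "i \<le> a" for i
  proof
    assume "(2 * int n) dvd (2 * int i - int a + int n)"
    moreover have "0 < 2 * int i - int a + int n" "2 * int i - int a + int n < 2 * int n"
      using that assms by auto
    ultimately show False
      using zdvd_not_zless by blast
  qed
  have "(\<Sum>j<2*n. (-1) ^ j * cheb_node n j ^ a)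
      = (\<Sum>i\<le>a. real (a choose i)
           * (\<Sum>j<2*n. cos (real_of_int (2 * int i - int a + int n) * (real j * pi / real n)))) / 2 ^ a"
  proof -
    have "(-1) ^ j * cheb_node n j ^ a
        = (\<Sum>i\<le>a. real (a choose i) * ((-1) ^ j * cos (real_of_int (2 * int i - int a) * (real j * pi / real n)))) / 2 ^ a"
      for j by (simp add: cos_power_eq_sum sum_distrib_left mult.left_commute)
    then show ?thesis
      by (simp only: shift sum_divide_distrib[symmetric] sum_distrib_left sum.swap[of _ "{..<2*n}"])
  qed
  also have "\<dots> = 0"
    by (simp only: sum_cos_int_multiple[OF assms(1)]) (simp add: not_dvd)
  finally show ?thesis .
qed

lemma I1_power_add_swap:
  assumes "n > 0" and "a < 2*n"
  shows "I1 s n (\<lambda>t. t ^ a) + I1 (swapEO s) n (\<lambda>t. t ^ a) = cheb_moment a"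
  using assms by (simp add: I1_eq_parity_rule parity_rule_add_swap sum_cheb_node_power)

lemma I1_power:
  assumes "n > 0" and "a < n"
  shows "I1 s n (\<lambda>t. t ^ a) = cheb_moment a / 2"
proof -
  have "parity_rule Ev n (\<lambda>t. t ^ a) = parity_rule Od n (\<lambda>t. t ^ a)"
    using parity_rule_diff[of n "\<lambda>t. t ^ a"] sum_alternating_cheb_node_power[OF assms] by simp
  moreover have "parity_rule Ev n (\<lambda>t. t ^ a) + parity_rule Od n (\<lambda>t. t ^ a) = cheb_moment a"
    using I1_power_add_swap[of n a Ev] assms by (simp add: I1_eq_parity_rule)
  ultimately show ?thesis
    using assms by (cases s) (simp_all add: I1_eq_parity_rule)
qed

lemma I1_sum:
  assumes "n > 0"
  shows "I1 s n (\<lambda>t. \<Sum>\<alpha>\<in>A. c \<alpha> * h \<alpha> t) = (\<Sum>\<alpha>\<in>A. c \<alpha> * I1 s n (h \<alpha>))"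
proof -
  have "(if P then \<Sum>\<alpha>\<in>A. c \<alpha> * h \<alpha> t else 0) = (\<Sum>\<alpha>\<in>A. c \<alpha> * (if P then h \<alpha> t else 0))"
    for P t by simp
  then show ?thesis
    using assms by (simp add: I1_eq_parity_rule parity_rule_def sum_divide_distrib[symmetric]
        sum_distrib_left sum.swap[of _ A])
qed

lemma I1_cmult:
  assumes "n > 0"
  shows "I1 s n (\<lambda>t. c * h t) = c * I1 s n h"
  using I1_sum[OF assms, where A = "{()}" and c = "\<lambda>_. c" and h = "\<lambda>_. h"] by simp

lemma iterI_sum:
  assumes "n > 0"
  shows "iterI \<sigma> n k (\<lambda>x. \<Sum>\<alpha>\<in>A. c \<alpha> * F \<alpha> x) x = (\<Sum>\<alpha>\<in>A. c \<alpha> * iterI \<sigma> n k (F \<alpha>) x)"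
  by (induction k arbitrary: x) (simp_all only: iterI.simps I1_sum[OF assms])

lemma iterI_monomial:
  assumes "n > 0" and "k \<le> d"
  shows "iterI \<sigma> n k (\<lambda>x. \<Prod>i<d. x i ^ \<alpha> i) x
     = (\<Prod>i<k. I1 (\<sigma> i) n (\<lambda>t. t ^ \<alpha> i)) * (\<Prod>i\<in>{k..<d}. x i ^ \<alpha> i)"
  using assms(2)
proof (induction k arbitrary: x)
  case 0
  then show ?case by (simp add: atLeast0LessThan)
next
  case (Suc k)
  have "(\<Prod>i\<in>{k..<d}. (x(k := t)) i ^ \<alpha> i) = t ^ \<alpha> k * (\<Prod>i\<in>{Suc k..<d}. x i ^ \<alpha> i)" for t
    using Suc.prems by (simp add: prod.atLeast_Suc_lessThan)
  then have "iterI \<sigma> n k (\<lambda>x. \<Prod>i<d. x i ^ \<alpha> i) (x(k := t))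
     = ((\<Prod>i<k. I1 (\<sigma> i) n (\<lambda>t. t ^ \<alpha> i)) * (\<Prod>i\<in>{Suc k..<d}. x i ^ \<alpha> i)) * t ^ \<alpha> k" for t
    using Suc by (simp add: mult_ac)
  then show ?case
    by (simp only: iterI.simps I1_cmult[OF assms(1)]) (simp add: mult_ac)
qed

lemma Ind_sum:
  assumes "n > 0"
  shows "Ind \<sigma> n d (\<lambda>x. \<Sum>\<alpha>\<in>A. c \<alpha> * F \<alpha> x) = (\<Sum>\<alpha>\<in>A. c \<alpha> * Ind \<sigma> n d (F \<alpha>))"
  unfolding Ind_def iterI_sum[OF assms] by (simp add: sum.distrib distrib_left)

lemma Ind_monomial:
  assumes "n > 0"
  shows "Ind \<sigma> n d (\<lambda>x. \<Prod>i<d. x i ^ \<alpha> i)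
     = (\<Prod>i<d. I1 (\<sigma> i) n (\<lambda>t. t ^ \<alpha> i)) + (\<Prod>i<d. I1 (swapEO (\<sigma> i)) n (\<lambda>t. t ^ \<alpha> i))"
  unfolding Ind_def iterI_monomial[OF assms order_refl] by simp

lemma Ind_monomial_exact:
  assumes n: "n > 0" and d: "d \<ge> 1" and deg: "(\<Sum>i<d. \<alpha> i) \<le> 2*n - 1"
  shows "2 ^ (d - 1) * Ind \<sigma> n d (\<lambda>x. \<Prod>i<d. x i ^ \<alpha> i) = (\<Prod>i<d. cheb_moment (\<alpha> i))"
proof (cases "\<forall>i<d. \<alpha> i < n")
  case True
  then have "(\<Prod>i<d. I1 (s i) n (\<lambda>t. t ^ \<alpha> i)) = (\<Prod>i<d. cheb_moment (\<alpha> i)) / 2 ^ d" for s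
    using n by (simp add: I1_power prod_dividef)
  moreover have "(2::real) ^ d = 2 * 2 ^ (d - 1)"
    using d by (cases d) auto
  ultimately show ?thesis
    by (simp add: Ind_monomial[OF n])
next
  case False
  then obtain k where k: "k < d" "\<alpha> k \<ge> n" by auto
  have "\<alpha> k \<le> (\<Sum>i<d. \<alpha> i)"
    using k by (intro member_le_sum) auto
  then have ak: "\<alpha> k < 2*n"
    using deg n by linarith
  have others: "\<alpha> i < n" if "i \<in> {..<d} - {k}" for i
  proof -
    have "\<alpha> k + \<alpha> i = (\<Sum>i\<in>{k, i}. \<alpha> i)" using that by simp
    also have "\<dots> \<le> (\<Sum>i<d. \<alpha> i)" using that k by (intro sum_mono2) auto
    finally show ?thesis using deg n k by linarith
  qed
  let ?R = "{..<d} - {k}"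
  have rest: "(\<Prod>i\<in>?R. I1 (s i) n (\<lambda>t. t ^ \<alpha> i)) = (\<Prod>i\<in>?R. cheb_moment (\<alpha> i)) / 2 ^ (d - 1)" for s
    using n k others by (simp add: I1_power prod_dividef)
  have "Ind \<sigma> n d (\<lambda>x. \<Prod>i<d. x i ^ \<alpha> i)
      = (I1 (\<sigma> k) n (\<lambda>t. t ^ \<alpha> k) + I1 (swapEO (\<sigma> k)) n (\<lambda>t. t ^ \<alpha> k))
        * ((\<Prod>i\<in>?R. cheb_moment (\<alpha> i)) / 2 ^ (d - 1))"
    using k rest[of \<sigma>] rest[of "swapEO \<circ> \<sigma>"]
    by (simp only: Ind_monomial[OF n]) (simp add: prod.remove distrib_right add_divide_distrib)
  then show ?thesis
    using k by (simp add: I1_power_add_swap[OF n ak] prod.remove)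
qed

lemma set_integral_m1_1_FTC_nonneg:
  fixes F f :: "real \<Rightarrow> real"
  assumes deriv: "\<And>t. -1 < t \<Longrightarrow> t < 1 \<Longrightarrow> DERIV F t :> f t"
    and cont: "\<And>t. -1 < t \<Longrightarrow> t < 1 \<Longrightarrow> isCont f t"
    and nonneg: "\<And>t. -1 < t \<Longrightarrow> t < 1 \<Longrightarrow> 0 \<le> f t"
    and F_cont: "continuous_on {-1..1} F"
  shows "set_integrable lborel {-1<..<1} f" and "(LINT t:{-1<..<1}|lborel. f t) = F 1 - F (-1)"
proof -
  have "(F \<longlongrightarrow> F (-1)) (at (-1) within {-1..1})" "(F \<longlongrightarrow> F 1) (at 1 within {-1..1})"
    using F_cont by (simp_all add: continuous_on_def)
  then have "(F \<longlongrightarrow> F (-1)) (at_right (-1))" "(F \<longlongrightarrow> F 1) (at_left 1)"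
    by (simp_all add: at_within_Icc_at_right at_within_Icc_at_left)
  then have "((F \<circ> real_of_ereal) \<longlongrightarrow> F (-1)) (at_right (ereal (-1)))"
    "((F \<circ> real_of_ereal) \<longlongrightarrow> F 1) (at_left (ereal 1))"
    by (simp_all add: ereal_tendsto_simps1)
  note FTC = interval_integral_FTC_nonneg[of "ereal (-1)" "ereal 1" F f, OF _ _ _ _ this]
  have "set_integrable lborel (einterval (ereal (-1)) (ereal 1)) f"
    by (rule FTC(1)) (auto intro: deriv cont nonneg)
  then show "set_integrable lborel {-1<..<1} f"
    by simp
  have "(LBINT t=ereal (-1)..ereal 1. f t) = F 1 - F (-1)"
    by (rule FTC(2)) (auto intro: deriv cont nonneg)
  then show "(LINT t:{-1<..<1}|lborel. f t) = F 1 - F (-1)"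
    by (simp add: interval_lebesgue_integral_le_eq)
qed

definition cos_mult_antideriv :: "int \<Rightarrow> real \<Rightarrow> real" where
  "cos_mult_antideriv m \<theta> = (if m = 0 then \<theta> else sin (real_of_int m * \<theta>) / real_of_int m)"

definition cos_power_antideriv :: "nat \<Rightarrow> real \<Rightarrow> real" where
  "cos_power_antideriv a \<theta> = (\<Sum>i\<le>a. real (a choose i) * cos_mult_antideriv (2 * int i - int a) \<theta>) / 2 ^ a"

lemma cos_mult_antideriv_deriv: "DERIV (cos_mult_antideriv m) \<theta> :> cos (real_of_int m * \<theta>)"
proof (cases "m = 0")
  case True
  then show ?thesis unfolding cos_mult_antideriv_def by (auto intro!: derivative_eq_intros)
next
  case False
  have "DERIV (\<lambda>\<theta>. sin (real_of_int m * \<theta>) / real_of_int m) \<theta> :> cos (real_of_int m * \<theta>)"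
    using False by (auto intro!: derivative_eq_intros)
  then show ?thesis using False unfolding cos_mult_antideriv_def by simp
qed

lemma cos_power_antideriv_deriv: "DERIV (cos_power_antideriv a) \<theta> :> cos \<theta> ^ a"
  unfolding cos_power_antideriv_def cos_power_eq_sum
  by (intro DERIV_cdivide DERIV_sum DERIV_cmult cos_mult_antideriv_deriv)

lemma cos_power_antideriv_0: "cos_power_antideriv a 0 = 0"
proof -
  have "cos_mult_antideriv m 0 = 0" for m
    by (simp add: cos_mult_antideriv_def)
  then show ?thesis
    by (simp add: cos_power_antideriv_def)
qed

lemma cos_power_antideriv_pi: "cos_power_antideriv a pi = pi * cheb_moment a"
proof -
  have "cos_mult_antideriv (2 * int i - int a) pi = (if 2 * i = a then pi else 0)" for i
    using sin_npi_int[of "2 * int i - int a"] by (auto simp: cos_mult_antideriv_def mult.commute)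
  then show ?thesis
    unfolding cos_power_antideriv_def cheb_moment_eq_sum times_divide_eq_right sum_distrib_left
    by (intro arg_cong[where f = "\<lambda>x. x / 2 ^ a"] sum.cong) auto
qed

text \<open>\<open>-cos_power_antideriv a (arccos t)\<close> is an antiderivative of \<open>t ^ a / sqrt (1 - t\<^sup>2)\<close>;
  adding \<open>arcsin\<close> makes the derivative nonnegative, which the improper FTC above requires.\<close>
definition cheb_antideriv :: "nat \<Rightarrow> real \<Rightarrow> real" where
  "cheb_antideriv a t = (arcsin t - cos_power_antideriv a (arccos t)) / pi"

lemma cheb_antideriv_deriv:
  assumes "-1 < t" "t < 1"
  shows "DERIV (cheb_antideriv a) t :> (1 + t ^ a) * (1 / sqrt (1 - t\<^sup>2)) / pi"
proof -
  have "t\<^sup>2 < 1"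
    using assms by (simp add: abs_square_less_1)
  then have "sqrt (1 - t\<^sup>2) \<noteq> 0"
    by simp
  moreover have "DERIV (\<lambda>t. cos_power_antideriv a (arccos t)) t
      :> cos (arccos t) ^ a * inverse (- sqrt (1 - t\<^sup>2))"
    by (rule DERIV_chain2[OF cos_power_antideriv_deriv DERIV_arccos[OF assms]])
  ultimately show ?thesis
    unfolding cheb_antideriv_def using assms
    by (auto intro!: derivative_eq_intros DERIV_arcsin simp: divide_simps)
qed

lemma cheb_antideriv_continuous: "continuous_on {-1..1} (cheb_antideriv a)"
proof -
  have "continuous_on UNIV (cos_power_antideriv a)"
    using cos_power_antideriv_deriv by (meson DERIV_isCont continuous_at_imp_continuous_on)
  then have "continuous_on {-1..1} (\<lambda>t. cos_power_antideriv a (arccos t))"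
    by (rule continuous_on_compose2[OF _ continuous_on_arccos']) auto
  then show ?thesis
    unfolding cheb_antideriv_def by (intro continuous_intros continuous_on_arcsin') auto
qed

lemma has_bochner_integral_cheb_power_plus_one:
  "has_bochner_integral lborel
     (\<lambda>t. indicator {-1<..<1} t * ((1 + t ^ a) * (1 / sqrt (1 - t\<^sup>2)) / pi)) (1 + cheb_moment a)"
proof -
  have nonneg: "0 \<le> (1 + t ^ a) * (1 / sqrt (1 - t\<^sup>2)) / pi" if "-1 < t" "t < 1" for t :: real
  proof -
    have "\<bar>t ^ a\<bar> \<le> 1"
      using that by (simp add: power_abs power_le_one)
    moreover have "t\<^sup>2 \<le> 1"
      using that by (simp add: abs_square_le_1)
    ultimately show ?thesis by simp
  qed
  have "isCont (\<lambda>t. (1 + t ^ a) * (1 / sqrt (1 - t\<^sup>2)) / pi) t" if "-1 < t" "t < 1" for t :: real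
    using that by (intro continuous_intros) (auto simp: power2_eq_1_iff)
  note FTC = set_integral_m1_1_FTC_nonneg[OF cheb_antideriv_deriv this nonneg cheb_antideriv_continuous]
  have "cheb_antideriv a 1 - cheb_antideriv a (-1) = 1 + cheb_moment a"
    by (simp add: cheb_antideriv_def cos_power_antideriv_0 cos_power_antideriv_pi field_simps)
  with FTC show ?thesis
    by (simp add: set_integrable_def set_lebesgue_integral_def has_bochner_integral_iff)
qed

text \<open>Subtracting the case \<open>a = 0\<close> recovers \<open>t\<^sup>a\<close> from the nonnegative \<open>1 + t\<^sup>a\<close>; at
  \<open>t = \<plusminus>1\<close> the weight is the junk value \<open>1 / sqrt 0 = 0\<close>, so closed and open intervals agree.\<close>
lemma has_bochner_integral_cheb_power:
  "has_bochner_integral lborel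
     (\<lambda>t. indicator {-1..1} t * (t ^ a * (1 / sqrt (1 - t\<^sup>2) / pi))) (cheb_moment a)"
proof -
  have "has_bochner_integral lborel
     (\<lambda>t. indicator {-1<..<1} t * ((1 + t ^ a) * (1 / sqrt (1 - t\<^sup>2)) / pi)
          - 1 / 2 * (indicator {-1<..<1} t * ((1 + t ^ 0) * (1 / sqrt (1 - t\<^sup>2)) / pi)))
     ((1 + cheb_moment a) - 1 / 2 * (1 + cheb_moment 0))"
    by (intro has_bochner_integral_diff has_bochner_integral_mult_right
        has_bochner_integral_cheb_power_plus_one)
  moreover have "(\<lambda>t. indicator {-1<..<1} t * ((1 + t ^ a) * (1 / sqrt (1 - t\<^sup>2)) / pi)
        - 1 / 2 * (indicator {-1<..<1} t * ((1 + t ^ 0) * (1 / sqrt (1 - t\<^sup>2)) / pi)))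
      = (\<lambda>t. indicator {-1..1} t * (t ^ a * (1 / sqrt (1 - t\<^sup>2) / pi)))"
  proof
    fix t :: real
    show "indicator {-1<..<1} t * ((1 + t ^ a) * (1 / sqrt (1 - t\<^sup>2)) / pi)
        - 1 / 2 * (indicator {-1<..<1} t * ((1 + t ^ 0) * (1 / sqrt (1 - t\<^sup>2)) / pi))
      = indicator {-1..1} t * (t ^ a * (1 / sqrt (1 - t\<^sup>2) / pi))"
      by (cases "t = 1 \<or> t = -1") (auto split: split_indicator simp: field_simps add_divide_distrib)
  qed
  ultimately show ?thesis
    by (simp add: cheb_moment_def)
qed

lemma indicator_PiE_const_eq_prod:
  assumes "x \<in> PiE I (\<lambda>_. UNIV)" and "finite I"
  shows "indicator (PiE I (\<lambda>_. B)) x = (\<Prod>i\<in>I. indicator B (x i) :: real)"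
proof (cases "x \<in> PiE I (\<lambda>_. B)")
  case True
  then show ?thesis by (auto simp: PiE_def indicator_def intro!: prod.neutral)
next
  case False
  then obtain i where "i \<in> I" "x i \<notin> B"
    using assms by (auto simp: PiE_def Pi_def)
  then show ?thesis
    using False assms(2) by (auto intro!: bexI[of _ i])
qed

lemma has_bochner_integral_cheb_monomial:
  "has_bochner_integral (PiM {..<d} (\<lambda>_. lborel))
     (\<lambda>x. indicator (PiE {..<d} (\<lambda>_. {-1..1::real})) x * ((\<Prod>i<d. x i ^ \<alpha> i) * chebW d x))
     (\<Prod>i<d. cheb_moment (\<alpha> i))"
proof -
  interpret product_sigma_finite "\<lambda>_::nat. lborel :: real measure"
    by (intro product_sigma_finite.intro) (simp add: lborel.sigma_finite_measure_axioms)
  let ?w = "\<lambda>a t. indicator {-1..1} t * (t ^ a * (1 / sqrt (1 - t\<^sup>2) / pi))"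
  have w: "integrable lborel (?w a)" "integral\<^sup>L lborel (?w a) = cheb_moment a" for a
    using has_bochner_integral_cheb_power[of a] by (simp_all add: has_bochner_integral_iff)
  have "integrable (PiM {..<d} (\<lambda>_. lborel)) (\<lambda>x. \<Prod>i<d. ?w (\<alpha> i) (x i))"
    by (intro product_integrable_prod finite_lessThan w(1))
  moreover have "(\<integral>x. (\<Prod>i<d. ?w (\<alpha> i) (x i)) \<partial>PiM {..<d} (\<lambda>_. lborel))
      = (\<Prod>i<d. integral\<^sup>L lborel (?w (\<alpha> i)))"
    by (intro product_integral_prod finite_lessThan w(1))
  ultimately have prod_integral: "has_bochner_integral (PiM {..<d} (\<lambda>_. lborel))
      (\<lambda>x. \<Prod>i<d. ?w (\<alpha> i) (x i)) (\<Prod>i<d. cheb_moment (\<alpha> i))"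
    by (simp only: has_bochner_integral_iff w(2))
  have integrand: "indicator (PiE {..<d} (\<lambda>_. {-1..1::real})) x * ((\<Prod>i<d. x i ^ \<alpha> i) * chebW d x)
      = (\<Prod>i<d. ?w (\<alpha> i) (x i))" if "x \<in> space (PiM {..<d} (\<lambda>_. lborel))" for x
  proof -
    have "pi ^ d = (\<Prod>i<d. pi)"
      by simp
    then have cheb: "chebW d x = (\<Prod>i<d. 1 / sqrt (1 - (x i)\<^sup>2) / pi)"
      unfolding chebW_def by (simp only: prod_dividef)
    have "x \<in> PiE {..<d} (\<lambda>_. UNIV)"
      using that by (simp add: space_PiM)
    note ind = indicator_PiE_const_eq_prod[OF this finite_lessThan, of "{-1..1}"]
    show ?thesis
      unfolding cheb ind prod.distrib[symmetric] by (rule prod.cong) auto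
  qed
  show ?thesis
    by (rule has_bochner_integral_cong[THEN iffD2, OF refl _ refl prod_integral]) (rule integrand)
qed

lemma cubature_exact:
  assumes d: "d \<ge> 1" and n: "n \<ge> 1" and f: "poly_deg_le d (2 * n - 1) f"
  shows "(\<integral>x. indicator (PiE {..<d} (\<lambda>_. {-1..1::real})) x * (f x * chebW d x)
            \<partial>(PiM {..<d} (\<lambda>_. lborel)))
       = 2 ^ (d - 1) * Ind \<sigma> n d f"
proof -
  define A where "A = {\<alpha>::nat \<Rightarrow> nat. (\<forall>i\<ge>d. \<alpha> i = 0) \<and> (\<Sum>i<d. \<alpha> i) \<le> 2 * n - 1}"
  obtain c where "\<forall>x. f x = (\<Sum>\<alpha>\<in>A. c \<alpha> * (\<Prod>i<d. x i ^ \<alpha> i))"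
    using f unfolding poly_deg_le_def A_def by blast
  then have f_eq: "f = (\<lambda>x. \<Sum>\<alpha>\<in>A. c \<alpha> * (\<Prod>i<d. x i ^ \<alpha> i))"
    by auto
  let ?cube = "PiE {..<d} (\<lambda>_. {-1..1::real})"
  have "(\<lambda>x. indicator ?cube x * (f x * chebW d x))
      = (\<lambda>x. \<Sum>\<alpha>\<in>A. c \<alpha> * (indicator ?cube x * ((\<Prod>i<d. x i ^ \<alpha> i) * chebW d x)))"
    by (simp add: f_eq sum_distrib_left sum_distrib_right mult_ac)
  moreover have "has_bochner_integral (PiM {..<d} (\<lambda>_. lborel))
      (\<lambda>x. \<Sum>\<alpha>\<in>A. c \<alpha> * (indicator ?cube x * ((\<Prod>i<d. x i ^ \<alpha> i) * chebW d x)))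
      (\<Sum>\<alpha>\<in>A. c \<alpha> * (\<Prod>i<d. cheb_moment (\<alpha> i)))"
    by (intro has_bochner_integral_sum has_bochner_integral_mult_right has_bochner_integral_cheb_monomial)
  ultimately have "(\<integral>x. indicator ?cube x * (f x * chebW d x) \<partial>(PiM {..<d} (\<lambda>_. lborel)))
      = (\<Sum>\<alpha>\<in>A. c \<alpha> * (\<Prod>i<d. cheb_moment (\<alpha> i)))"
    by (simp add: has_bochner_integral_integral_eq)
  also have "\<dots> = (\<Sum>\<alpha>\<in>A. c \<alpha> * (2 ^ (d - 1) * Ind \<sigma> n d (\<lambda>x. \<Prod>i<d. x i ^ \<alpha> i)))"
  proof (intro sum.cong refl)
    fix \<alpha> assume "\<alpha> \<in> A"
    then show "c \<alpha> * (\<Prod>i<d. cheb_moment (\<alpha> i))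
        = c \<alpha> * (2 ^ (d - 1) * Ind \<sigma> n d (\<lambda>x. \<Prod>i<d. x i ^ \<alpha> i))"
      using n d Ind_monomial_exact[of n d \<alpha> \<sigma>] by (simp add: A_def)
  qed
  also have "\<dots> = 2 ^ (d - 1) * Ind \<sigma> n d f"
    using n by (simp add: f_eq Ind_sum sum_distrib_left mult.left_commute)
  finally show ?thesis .
qed

lemma cheb_node_inj:
  assumes "n > 0" "j \<le> n" "k \<le> n" "cheb_node n j = cheb_node n k"
  shows "j = k"
proof -
  have "real j * pi / real n = real k * pi / real n"
  proof (rule cos_inj_pi)
    show "real j * pi / real n \<le> pi" "real k * pi / real n \<le> pi"
      using assms by (auto simp: divide_le_eq mult.commute intro: mult_left_mono)
  qed (use assms(4) in auto)
  then show ?thesis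
    using assms(1) by (simp add: field_simps)
qed

lemma G_eq_image: "G s n = cheb_node n ` {j. j \<le> n \<and> EO_parity s j}"
  unfolding G_def EO_parity_def by auto

lemma card_even_atMost: "card {j. j \<le> n \<and> even j} = n div 2 + 1"
proof -
  have "{j. j \<le> n \<and> even j} = (\<lambda>i. 2 * i) ` {..n div 2}"
    by (auto elim!: evenE)
  then show ?thesis
    by (simp add: card_image inj_on_def)
qed

lemma card_odd_atMost: "card {j. j \<le> n \<and> odd j} = (n + 1) div 2"
proof -
  have "{j. j \<le> n \<and> odd j} = (\<lambda>i. 2 * i + 1) ` {..<(n + 1) div 2}"
    by (auto elim!: oddE)
  then show ?thesis
    by (simp add: card_image inj_on_def)
qed

lemma card_G:
  assumes "n > 0"
  shows "card (G s n) = (case s of Ev \<Rightarrow> n div 2 + 1 | Od \<Rightarrow> (n + 1) div 2)"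
proof -
  have "card (G s n) = card {j. j \<le> n \<and> EO_parity s j}"
    unfolding G_eq_image by (rule card_image) (auto simp: inj_on_def intro: cheb_node_inj[OF assms])
  then show ?thesis
    by (cases s) (simp_all add: EO_parity_def card_even_atMost card_odd_atMost)
qed

lemma G_swapEO_disjoint:
  assumes "n > 0"
  shows "G s n \<inter> G (swapEO s) n = {}"
proof -
  have "cheb_node n j \<noteq> cheb_node n k"
    if "j \<le> n" "k \<le> n" "EO_parity s j" "EO_parity (swapEO s) k" for j k
    using that cheb_node_inj[OF assms, of j k] by auto
  then show ?thesis
    unfolding G_eq_image by blast
qed

lemma num_nodes_eq:
  assumes "n > 0" and "d \<ge> 1"
  shows "num_nodes \<sigma> n d = (\<Prod>i<d. card (G (\<sigma> i) n)) + (\<Prod>i<d. card (G (swapEO (\<sigma> i)) n))"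
proof -
  have "grid \<sigma> n d \<inter> grid (swapEO \<circ> \<sigma>) n d = {}"
  proof (rule ccontr)
    assume "grid \<sigma> n d \<inter> grid (swapEO \<circ> \<sigma>) n d \<noteq> {}"
    then obtain x where "x \<in> grid \<sigma> n d" "x \<in> grid (swapEO \<circ> \<sigma>) n d"
      by auto
    then have "x 0 \<in> G (\<sigma> 0) n" "x 0 \<in> G (swapEO (\<sigma> 0)) n"
      using assms(2) by (auto simp: grid_def PiE_def Pi_def)
    then show False
      using G_swapEO_disjoint[OF assms(1), of "\<sigma> 0"] by auto
  qed
  moreover have "finite (grid s n d)" for s
    unfolding grid_def G_eq_image by (intro finite_PiE) auto
  ultimately show ?thesis
    unfolding num_nodes_def by (simp add: card_Un_disjoint grid_def card_PiE)
qed

lemma power_add_one_diff_le: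
  fixes x :: real
  assumes "x \<ge> 0"
  shows "(x + 1) ^ d - x ^ d \<le> real d * (x + 1) ^ (d - 1)"
proof (induction d)
  case 0
  then show ?case by simp
next
  case (Suc d)
  have "(x + 1) ^ Suc d - x ^ Suc d = (x + 1) * ((x + 1) ^ d - x ^ d) + x ^ d"
    by (simp add: algebra_simps)
  also have "\<dots> \<le> (x + 1) * (real d * (x + 1) ^ (d - 1)) + (x + 1) ^ d"
    using Suc assms by (intro add_mono mult_left_mono power_mono) auto
  also have "(x + 1) * (real d * (x + 1) ^ (d - 1)) = real d * (x + 1) ^ d"
    by (cases d) auto
  finally show ?case
    by (simp add: algebra_simps)
qed

lemma num_nodes_asymptotic:
  assumes d: "d \<ge> 1"
  shows "(\<lambda>n. real (num_nodes \<sigma> n d) - 2 * real (n div 2) ^ d) \<in> O(\<lambda>n. real (n div 2) ^ d / real n)"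
proof (rule bigoI[where c = "3 * real d * 2 ^ d"])
  show "\<forall>\<^sub>F n in at_top. norm (real (num_nodes \<sigma> n d) - 2 * real (n div 2) ^ d)
          \<le> (3 * real d * 2 ^ d) * norm (real (n div 2) ^ d / real n)"
  proof (rule eventually_mono[OF eventually_ge_at_top[of 2]])
    fix n :: nat
    assume n: "2 \<le> n"
    define h where "h = real (n div 2)"
    have h: "1 \<le> h"
      using n by (simp add: h_def)
    have "n \<le> 3 * (n div 2)"
      using n by presburger
    then have n_le: "real n \<le> 3 * h"
      unfolding h_def by linarith
    have card: "h \<le> real (card (G s n)) \<and> real (card (G s n)) \<le> h + 1" for s
      using card_G[of n s] n by (cases s) (auto simp: h_def)
    have N: "real (num_nodes \<sigma> n d)
        = (\<Prod>i<d. real (card (G (\<sigma> i) n))) + (\<Prod>i<d. real (card (G (swapEO (\<sigma> i)) n)))"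
      using num_nodes_eq[of n d \<sigma>] n d by simp
    have prod_lower: "h ^ d \<le> (\<Prod>i<d. real (card (G (s i) n)))" for s
      using prod_mono[of "{..<d}" "\<lambda>_. h" "\<lambda>i. real (card (G (s i) n))"] card h by auto
    have prod_upper: "(\<Prod>i<d. real (card (G (s i) n))) \<le> (h + 1) ^ d" for s
      using prod_mono[of "{..<d}" "\<lambda>i. real (card (G (s i) n))" "\<lambda>_. h + 1"] card h by auto
    have lower: "2 * h ^ d \<le> real (num_nodes \<sigma> n d)"
      using N prod_lower[of \<sigma>] prod_lower[of "\<lambda>i. swapEO (\<sigma> i)"] by linarith
    have "real (num_nodes \<sigma> n d) - 2 * h ^ d \<le> 2 * ((h + 1) ^ d - h ^ d)"
      using N prod_upper[of \<sigma>] prod_upper[of "\<lambda>i. swapEO (\<sigma> i)"] by argo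
    also have "\<dots> \<le> 2 * (real d * (2 * h) ^ (d - 1))"
      using power_add_one_diff_le[of h d] power_mono[of "h + 1" "2 * h" "d - 1"] h
      by (smt (verit) mult_left_mono of_nat_0_le_iff)
    also have "\<dots> = real d * 2 ^ d * h ^ (d - 1)"
      using d by (cases d) (simp_all add: power_mult_distrib)
    also have "\<dots> \<le> real d * 2 ^ d * (3 * h ^ d / real n)"
    proof (intro mult_left_mono)
      have "h ^ (d - 1) * real n \<le> h ^ (d - 1) * (3 * h)"
        using n_le h by (intro mult_left_mono) auto
      also have "\<dots> = 3 * h ^ d"
        using d by (cases d) auto
      finally show "h ^ (d - 1) \<le> 3 * h ^ d / real n"
        using n by (simp add: field_simps)
    qed auto
    finally show "norm (real (num_nodes \<sigma> n d) - 2 * real (n div 2) ^ d)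
        \<le> (3 * real d * 2 ^ d) * norm (real (n div 2) ^ d / real n)"
      using lower h unfolding h_def[symmetric] by (simp add: mult_ac)
  qed
qed

theorem theorem1:
  fixes d :: nat and \<sigma> :: "nat \<Rightarrow> EO"
  assumes "d \<ge> 1"
  shows "(\<forall>n f. n \<ge> 1 \<and> poly_deg_le d (2 * n - 1) f \<longrightarrow>
            (\<integral>x. indicator (PiE {..<d} (\<lambda>_. {-1..1::real})) x * (f x * chebW d x)
               \<partial>(PiM {..<d} (\<lambda>_. lborel)))
            = 2 ^ (d - 1) * Ind \<sigma> n d f)
       \<and> (\<lambda>n. real (num_nodes \<sigma> n d) - 2 * real (n div 2) ^ d)
           \<in> O(\<lambda>n. real (n div 2) ^ d / real n)"
  using cubature_exact[OF assms] num_nodes_asymptotic[OF assms] by blast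

end
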